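(* Let $\phi=(\phi_1,\phi_2)^{\mathsf T}$ be the Hermite cubic splines $$\phi_1(x)=\begin{cases}(1-x)^2(1+2x),&x\in[0,1],\\(1+x)^2(1-2x),&x\in[-1,0),\\0,&\text{otherwise},\end{cases}\qquad \phi_2(x)=\begin{cases}(1-x)^2x,&x\in[0,1],\\(1+x)^2x,&x\in[-1,0),\\0,&\text{otherwise},\end{cases}$$ and let $\psi=(\psi_1,\psi_2)^{\mathsf T}$ with $\psi_\ell(x):=\phi_\ell(2x-1)$, $\ell=1,2$. Define $\mathring{\psi}:=\operatorname{diag}(\sqrt3/24,\,1/8)\,\psi''$ (second derivative taken piecewise, i.e. in the weak sense, which is a square-integrable function) and $\mathring{\phi}(x):=\big(\chi_{[0,1]}(x),\ \sqrt3(2x-1)\chi_{[0,1]}(x)\big)^{\mathsf T}$. Then the system $$\{\mathring{\phi}_\ell(\cdot-k): k\in\mathbb{Z},\ \ell=1,2\}\cup\{2^{j/2}\mathring{\psi}_\ell(2^j\cdot-k): j\ge 0,\ k\in\mathbb{Z},\ \ell=1,2\}$$ is an orthonormal basis of $L_2(\mathbb{R})$; that is, $\{\mathring{\phi};\mathring{\psi}\}$ is an orthogonal (multi)wavelet in $L_2(\mathbb{R})$.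
   Context: $\chi_{[0,1]}$ denotes the indicator function of $[0,1]$. *)

theory Defs
  imports "HOL-Analysis.Analysis"
begin

definition square_integrable :: "(real \<Rightarrow> real) \<Rightarrow> bool" where
  "square_integrable f \<longleftrightarrow> f \<in> borel_measurable lborel \<and> integrable lborel (\<lambda>x. (f x)^2)"

definition L2_inner :: "(real \<Rightarrow> real) \<Rightarrow> (real \<Rightarrow> real) \<Rightarrow> real" where
  "L2_inner f g = (LINT x|lborel. f x * g x)"

definition orthonormal_basis_L2 :: "'i set \<Rightarrow> ('i \<Rightarrow> real \<Rightarrow> real) \<Rightarrow> bool" where
  "orthonormal_basis_L2 I e \<longleftrightarrow>
     (\<forall>i\<in>I. square_integrable (e i)) \<and>
     (\<forall>i\<in>I. \<forall>j\<in>I. L2_inner (e i) (e j) = (if i = j then 1 else 0)) \<and>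
     (\<forall>f. square_integrable f \<longrightarrow>
        (\<forall>\<epsilon>>0. \<exists>F c. finite F \<and> F \<subseteq> I \<and>
           (LINT x|lborel. (f x - (\<Sum>i\<in>F. c i * e i x))^2) < \<epsilon>))"

definition hphi :: "nat \<Rightarrow> real \<Rightarrow> real" where
  "hphi l x =
     (if l = 1 then
        (if 0 \<le> x \<and> x \<le> 1 then (1 - x)^2 * (1 + 2*x)
         else if -1 \<le> x \<and> x < 0 then (1 + x)^2 * (1 - 2*x) else 0)
      else
        (if 0 \<le> x \<and> x \<le> 1 then (1 - x)^2 * x
         else if -1 \<le> x \<and> x < 0 then (1 + x)^2 * x else 0))"

definition hpsi :: "nat \<Rightarrow> real \<Rightarrow> real" where
  "hpsi l x = hphi l (2*x - 1)"

text \<open>psi-ring = diag(sqrt 3/24, 1/8) psi''; the second derivative is taken pointwise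
  (it exists except at the finitely many knots 0, 1/2, 1, a null set).\<close>
definition rpsi :: "nat \<Rightarrow> real \<Rightarrow> real" where
  "rpsi l x = (if l = 1 then sqrt 3 / 24 else 1/8) * deriv (deriv (hpsi l)) x"

definition rphi :: "nat \<Rightarrow> real \<Rightarrow> real" where
  "rphi l x = (if l = 1 then indicator {0..1} x else sqrt 3 * (2*x - 1) * indicator {0..1} x)"

definition wav_index :: "((nat \<times> int) + (nat \<times> int \<times> nat)) set" where
  "wav_index = {Inl (l, k) | l k. l \<in> {1,2}} \<union> {Inr (j, k, l) | j k l. l \<in> {1,2}}"

definition wav_system :: "((nat \<times> int) + (nat \<times> int \<times> nat)) \<Rightarrow> real \<Rightarrow> real" where
  "wav_system i x = (case i of
      Inl (l, k) \<Rightarrow> rphi l (x - real_of_int k)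
    | Inr (j, k, l) \<Rightarrow> 2 powr (real j / 2) * rpsi l (2^j * x - real_of_int k))"

end

theory Submission
  imports Defs
begin

text \<open>Orthonormality: \<open>rpsi l\<close> is a multiple of a second derivative of a function vanishing
  to first order at \<open>0\<close> and \<open>1\<close>, so it has two vanishing moments and is orthogonal to every function
  that is affine on \<open>[0,1]\<close>. Every shift of \<open>rphi\<close> and every wavelet of a coarser level is affine
  on each dyadic interval of a finer level, and the remaining inner products are integrals of
  explicit piecewise quadratic polynomials.

  Completeness: the box and the ramp on \<open>[0,1]\<close> satisfy two-scale relations which express
  their dilates at level \<open>n + 1\<close> through those at level \<open>n\<close> and the wavelets at level \<open>n\<close>.
  By induction all indicators of dyadic intervals lie in the span, and these are dense in
  \<open>L\<^sub>2(\<real>)\<close>: open sets are exhausted by dyadic intervals, sets of finite measure are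
  approximated by open sets, and square-integrable functions by simple functions.\<close>

section \<open>A density criterion in \<open>L\<^sub>2(\<real>)\<close>\<close>

lemma square_integrable_measurable [measurable_dest]:
  "square_integrable f \<Longrightarrow> f \<in> borel_measurable lborel"
  by (simp add: square_integrable_def)

lemma square_integrable_add:
  assumes f: "square_integrable f" and g: "square_integrable g"
  shows "square_integrable (\<lambda>x. f x + g x)"
proof -
  have "integrable lborel (\<lambda>x. (f x + g x)\<^sup>2)"
  proof (rule Bochner_Integration.integrable_bound)
    show "integrable lborel (\<lambda>x. 2 * (f x)\<^sup>2 + 2 * (g x)\<^sup>2)"
      using f g by (auto simp: square_integrable_def)
    have "(f x + g x)\<^sup>2 \<le> 2 * (f x)\<^sup>2 + 2 * (g x)\<^sup>2" for x
      using zero_le_power2[of "f x - g x"] by (simp add: power2_eq_square algebra_simps)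
    then show "AE x in lborel. norm ((f x + g x)\<^sup>2) \<le> norm (2 * (f x)\<^sup>2 + 2 * (g x)\<^sup>2)"
      by simp
  qed (use f g in measurable)
  moreover have "(\<lambda>x. f x + g x) \<in> borel_measurable lborel"
    using f g by measurable
  ultimately show ?thesis by (simp add: square_integrable_def)
qed

lemma square_integrable_scale:
  assumes "square_integrable f" shows "square_integrable (\<lambda>x. c * f x)"
proof -
  have "(\<lambda>x. c * f x) \<in> borel_measurable lborel"
    using assms by measurable
  then show ?thesis
    using assms by (simp add: square_integrable_def power_mult_distrib)
qed

lemma square_integrable_diff:
  "square_integrable f \<Longrightarrow> square_integrable g \<Longrightarrow> square_integrable (\<lambda>x. f x - g x)"
  using square_integrable_add[of f "\<lambda>x. -1 * g x"] square_integrable_scale[of g "-1"] by simp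

lemma square_integrable_indicator:
  assumes "A \<in> sets lborel" "emeasure lborel A < \<infinity>"
  shows "square_integrable (indicator A)"
proof -
  have "(\<lambda>x. (indicator A x :: real)\<^sup>2) = indicator A"
    by (auto simp: indicator_def)
  then show ?thesis
    using assms by (simp add: square_integrable_def integrable_indicator_iff)
qed

lemma integral_square_add_le:
  assumes "square_integrable u" "square_integrable v"
  shows "(LINT x|lborel. (u x + v x)\<^sup>2) \<le> 2 * (LINT x|lborel. (u x)\<^sup>2) + 2 * (LINT x|lborel. (v x)\<^sup>2)"
proof -
  have "(LINT x|lborel. (u x + v x)\<^sup>2) \<le> (LINT x|lborel. 2 * (u x)\<^sup>2 + 2 * (v x)\<^sup>2)"
  proof (rule integral_mono)
    show "(u x + v x)\<^sup>2 \<le> 2 * (u x)\<^sup>2 + 2 * (v x)\<^sup>2" for x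
      using zero_le_power2[of "u x - v x"] by (simp add: power2_eq_square algebra_simps)
  qed (use assms square_integrable_add in \<open>auto simp: square_integrable_def\<close>)
  also have "\<dots> = 2 * (LINT x|lborel. (u x)\<^sup>2) + 2 * (LINT x|lborel. (v x)\<^sup>2)"
    using assms by (simp add: square_integrable_def)
  finally show ?thesis .
qed

definition dyadic_interval :: "nat \<Rightarrow> int \<Rightarrow> real set" where
  "dyadic_interval n k = {real_of_int k / 2^n ..< (real_of_int k + 1) / 2^n}"

lemma mem_dyadic_interval_iff: "x \<in> dyadic_interval n k \<longleftrightarrow> \<lfloor>2^n * x\<rfloor> = k"
  unfolding dyadic_interval_def by (simp add: floor_eq_iff field_simps)

lemma dyadic_interval_sets [measurable]: "dyadic_interval n k \<in> sets borel"
  by (simp add: dyadic_interval_def)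

lemma dyadic_interval_Suc_subset:
  assumes "x \<in> dyadic_interval n k"
  shows "dyadic_interval (Suc n) \<lfloor>2^Suc n * x\<rfloor> \<subseteq> dyadic_interval n k"
proof
  have halve: "\<lfloor>2^n * t\<rfloor> = \<lfloor>2^Suc n * t\<rfloor> div 2" for t :: real
    using floor_divide_real_eq_div[of 2 "2^Suc n * t"] by simp
  fix z assume "z \<in> dyadic_interval (Suc n) \<lfloor>2^Suc n * x\<rfloor>"
  then show "z \<in> dyadic_interval n k"
    using assms by (simp add: mem_dyadic_interval_iff halve[of z] halve[of x])
qed

definition dyadic_indices :: "nat \<Rightarrow> real set \<Rightarrow> int set" where
  "dyadic_indices n U = {k. \<bar>k\<bar> \<le> int n * 2^n \<and> dyadic_interval n k \<subseteq> U}"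

definition dyadic_inner :: "nat \<Rightarrow> real set \<Rightarrow> real set" where
  "dyadic_inner n U = (\<Union>k\<in>dyadic_indices n U. dyadic_interval n k)"

lemma finite_dyadic_indices: "finite (dyadic_indices n U)"
  by (rule finite_subset[of _ "{- (int n * 2^n) .. int n * 2^n}"]) (auto simp: dyadic_indices_def)

lemma dyadic_inner_sets [measurable]: "dyadic_inner n U \<in> sets borel"
  unfolding dyadic_inner_def using finite_dyadic_indices by (intro sets.finite_UN) auto

lemma dyadic_inner_subset: "dyadic_inner n U \<subseteq> U"
  by (auto simp: dyadic_inner_def dyadic_indices_def)

lemma indicator_dyadic_inner:
  "indicator (dyadic_inner n U) x = (\<Sum>k\<in>dyadic_indices n U. indicator (dyadic_interval n k) x :: real)"
proof -
  have "(\<Sum>k\<in>dyadic_indices n U. indicator (dyadic_interval n k) x :: real)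
      = (\<Sum>k\<in>dyadic_indices n U. if \<lfloor>2^n * x\<rfloor> = k then 1 else 0)"
    by (rule sum.cong) (auto simp: indicator_def mem_dyadic_interval_iff)
  also have "\<dots> = indicator (dyadic_inner n U) x"
    using finite_dyadic_indices by (auto simp: indicator_def dyadic_inner_def mem_dyadic_interval_iff)
  finally show ?thesis ..
qed

lemma dyadic_inner_Suc: "dyadic_inner n U \<subseteq> dyadic_inner (Suc n) U"
proof
  fix x assume "x \<in> dyadic_inner n U"
  then obtain k where k: "\<bar>k\<bar> \<le> int n * 2^n" "dyadic_interval n k \<subseteq> U" "x \<in> dyadic_interval n k"
    by (auto simp: dyadic_inner_def dyadic_indices_def)
  define k' where "k' = \<lfloor>2^Suc n * x\<rfloor>"
  have "k = k' div 2"
    using k(3) floor_divide_real_eq_div[of 2 "2^Suc n * x"] by (simp add: k'_def mem_dyadic_interval_iff)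
  then have "\<bar>k'\<bar> \<le> 2 * \<bar>k\<bar> + 1" by linarith
  also have "\<dots> \<le> 2 * (int n * 2^n) + 2 * 2^n"
    using k(1) one_le_power[of "2::int" n] by linarith
  also have "\<dots> = int (Suc n) * 2^Suc n"
    by (simp add: algebra_simps)
  finally have "k' \<in> dyadic_indices (Suc n) U"
    using dyadic_interval_Suc_subset[OF k(3)] k(2) by (auto simp: dyadic_indices_def k'_def)
  moreover have "x \<in> dyadic_interval (Suc n) k'"
    by (simp add: mem_dyadic_interval_iff k'_def)
  ultimately show "x \<in> dyadic_inner (Suc n) U"
    by (auto simp: dyadic_inner_def)
qed

lemma dyadic_interval_subset_ball:
  assumes "x \<in> dyadic_interval n k"
  shows "dyadic_interval n k \<subseteq> ball x (1 / 2^n)"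
proof
  fix z assume "z \<in> dyadic_interval n k"
  with assms have "\<bar>2^n * z - 2^n * x\<bar> < 1"
    unfolding mem_dyadic_interval_iff by linarith
  moreover have "\<bar>2^n * z - 2^n * x\<bar> = 2^n * \<bar>z - x\<bar>"
    by (simp add: abs_mult flip: right_diff_distrib)
  ultimately show "z \<in> ball x (1 / 2^n)"
    by (simp add: dist_real_def abs_minus_commute field_simps)
qed

lemma abs_floor_dyadic_le:
  assumes "\<bar>x\<bar> + 1 \<le> real n"
  shows "\<bar>\<lfloor>2^n * x\<rfloor>\<bar> \<le> int n * 2^n"
proof -
  have "\<bar>real_of_int \<lfloor>2^n * x\<rfloor>\<bar> \<le> \<bar>2^n * x\<bar> + 1"
    using of_int_floor_le[of "2^n * x"] real_of_int_floor_add_one_gt[of "2^n * x"] by linarith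
  also have "\<dots> \<le> 2^n * (\<bar>x\<bar> + 1)"
    by (simp add: abs_mult algebra_simps)
  also have "\<dots> \<le> 2^n * real n"
    using assms by simp
  finally have "real_of_int \<bar>\<lfloor>2^n * x\<rfloor>\<bar> \<le> real_of_int (int n * 2^n)"
    by (simp add: mult.commute)
  then show ?thesis by linarith
qed

lemma UN_dyadic_inner:
  assumes "open U"
  shows "(\<Union>n. dyadic_inner n U) = U"
proof (intro equalityI subsetI)
  fix x assume "x \<in> U"
  then obtain r where r: "r > 0" "ball x r \<subseteq> U"
    using assms open_contains_ball by blast
  obtain n1 where n1: "(1/2::real)^n1 < r"
    using real_arch_pow_inv[OF r(1), of "1/2"] by auto
  define n where "n = max n1 (nat \<lceil>\<bar>x\<bar>\<rceil> + 1)"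
  have "(1/2::real)^n \<le> (1/2)^n1"
    unfolding n_def by (rule power_decreasing) auto
  with n1 have small: "ball x (1 / 2^n) \<subseteq> ball x r"
    by (auto simp: power_divide)
  have x: "x \<in> dyadic_interval n \<lfloor>2^n * x\<rfloor>"
    by (simp add: mem_dyadic_interval_iff)
  have "\<bar>x\<bar> + 1 \<le> real n"
    unfolding n_def by linarith
  then have "\<lfloor>2^n * x\<rfloor> \<in> dyadic_indices n U"
    using dyadic_interval_subset_ball[OF x] small r(2) abs_floor_dyadic_le
    unfolding dyadic_indices_def by blast
  with x show "x \<in> (\<Union>n. dyadic_inner n U)"
    unfolding dyadic_inner_def by blast
qed (use dyadic_inner_subset in blast)

lemma emeasure_diff_dyadic_inner_small:
  assumes "open U" "emeasure lborel U < \<infinity>" "e > 0"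
  obtains n where "emeasure lborel (U - dyadic_inner n U) < e"
proof -
  have lim: "(\<lambda>n. emeasure lborel (U - dyadic_inner n U)) \<longlonglongrightarrow> emeasure lborel (\<Inter>n. U - dyadic_inner n U)"
  proof (rule Lim_emeasure_decseq)
    show "decseq (\<lambda>n. U - dyadic_inner n U)"
      by (rule decseq_SucI) (use dyadic_inner_Suc in blast)
    show "emeasure lborel (U - dyadic_inner n U) \<noteq> \<infinity>" for n
      using emeasure_mono[of "U - dyadic_inner n U" U lborel] assms by (auto simp: top_unique)
  qed (use assms(1) in auto)
  have "(\<Inter>n. U - dyadic_inner n U) = {}"
    using UN_dyadic_inner[OF assms(1)] by blast
  with lim have "(\<lambda>n. emeasure lborel (U - dyadic_inner n U)) \<longlonglongrightarrow> 0"
    by (simp only: emeasure_empty)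
  then have "eventually (\<lambda>n. emeasure lborel (U - dyadic_inner n U) < e) sequentially"
    using assms(3) by (rule order_tendstoD(2))
  then show ?thesis using that eventually_sequentially by auto
qed

locale l2_subspace =
  fixes V :: "(real \<Rightarrow> real) set"
  assumes zero_mem: "(\<lambda>x. 0) \<in> V"
    and add_mem: "f \<in> V \<Longrightarrow> g \<in> V \<Longrightarrow> (\<lambda>x. f x + g x) \<in> V"
    and scale_mem: "f \<in> V \<Longrightarrow> (\<lambda>x. c * f x) \<in> V"
    and mem_square_integrable: "f \<in> V \<Longrightarrow> square_integrable f"
begin

lemma sum_mem: "finite A \<Longrightarrow> (\<And>i. i \<in> A \<Longrightarrow> f i \<in> V) \<Longrightarrow> (\<lambda>x. \<Sum>i\<in>A. f i x) \<in> V"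
  by (induction A rule: finite_induct) (auto intro: zero_mem add_mem)

definition approximable :: "(real \<Rightarrow> real) \<Rightarrow> bool" where
  "approximable f \<longleftrightarrow> square_integrable f \<and> (\<forall>e>0. \<exists>g\<in>V. (LINT x|lborel. (f x - g x)\<^sup>2) < e)"

lemma approximable_mem: "f \<in> V \<Longrightarrow> approximable f"
  by (auto simp: approximable_def mem_square_integrable intro!: bexI[of _ f])

lemma approximable_limit:
  assumes f: "square_integrable f"
    and approx: "\<And>e. e > 0 \<Longrightarrow> \<exists>h. approximable h \<and> (LINT x|lborel. (f x - h x)\<^sup>2) < e"
  shows "approximable f"
  unfolding approximable_def
proof (intro conjI f allI impI)
  fix e :: real assume "e > 0"
  then obtain h where h: "approximable h" "(LINT x|lborel. (f x - h x)\<^sup>2) < e/4"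
    using approx[of "e/4"] by auto
  moreover have "e/4 > 0" using \<open>e > 0\<close> by simp
  ultimately obtain g where g: "g \<in> V" "(LINT x|lborel. (h x - g x)\<^sup>2) < e/4"
    unfolding approximable_def by blast
  have "(LINT x|lborel. (f x - g x)\<^sup>2) = (LINT x|lborel. ((f x - h x) + (h x - g x))\<^sup>2)"
    by simp
  also have "\<dots> \<le> 2 * (LINT x|lborel. (f x - h x)\<^sup>2) + 2 * (LINT x|lborel. (h x - g x)\<^sup>2)"
    using f h g by (intro integral_square_add_le square_integrable_diff)
      (auto simp: approximable_def mem_square_integrable)
  also have "\<dots> < e" using h g by simp
  finally show "\<exists>g\<in>V. (LINT x|lborel. (f x - g x)\<^sup>2) < e"
    using g(1) by (rule bexI)
qed

lemma approximable_add:
  assumes f: "approximable f" and g: "approximable g"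
  shows "approximable (\<lambda>x. f x + g x)"
  unfolding approximable_def
proof (intro conjI allI impI)
  show "square_integrable (\<lambda>x. f x + g x)"
    using f g by (intro square_integrable_add) (auto simp: approximable_def)
  fix e :: real assume "e > 0"
  then have "e/4 > 0" by simp
  then obtain f' g' where f': "f' \<in> V" "(LINT x|lborel. (f x - f' x)\<^sup>2) < e/4"
    and g': "g' \<in> V" "(LINT x|lborel. (g x - g' x)\<^sup>2) < e/4"
    using f g unfolding approximable_def by blast
  have "(LINT x|lborel. (f x + g x - (f' x + g' x))\<^sup>2)
      = (LINT x|lborel. ((f x - f' x) + (g x - g' x))\<^sup>2)"
    by (simp add: algebra_simps)
  also have "\<dots> \<le> 2 * (LINT x|lborel. (f x - f' x)\<^sup>2) + 2 * (LINT x|lborel. (g x - g' x)\<^sup>2)"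
    using f g f' g' by (intro integral_square_add_le square_integrable_diff)
      (auto simp: approximable_def mem_square_integrable)
  also have "\<dots> < e" using f' g' by simp
  finally have "(LINT x|lborel. (f x + g x - (f' x + g' x))\<^sup>2) < e" .
  moreover have "(\<lambda>x. f' x + g' x) \<in> V"
    using f'(1) g'(1) by (rule add_mem)
  ultimately show "\<exists>h\<in>V. (LINT x|lborel. (f x + g x - h x)\<^sup>2) < e"
    by (rule bexI)
qed

lemma approximable_scale:
  assumes f: "approximable f"
  shows "approximable (\<lambda>x. c * f x)"
  unfolding approximable_def
proof (intro conjI allI impI)
  show "square_integrable (\<lambda>x. c * f x)"
    using f by (intro square_integrable_scale) (auto simp: approximable_def)
  fix e :: real assume "e > 0"
  have c: "c\<^sup>2 + 1 > 0" by (simp add: add_nonneg_pos)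
  have "e / (c\<^sup>2 + 1) > 0"
    using \<open>e > 0\<close> c by simp
  then obtain g where g: "g \<in> V" "(LINT x|lborel. (f x - g x)\<^sup>2) < e / (c\<^sup>2 + 1)"
    using f unfolding approximable_def by blast
  have "(c * f x - c * g x)\<^sup>2 = c\<^sup>2 * (f x - g x)\<^sup>2" for x
    by (simp add: power2_eq_square algebra_simps)
  then have "(LINT x|lborel. (c * f x - c * g x)\<^sup>2) = c\<^sup>2 * (LINT x|lborel. (f x - g x)\<^sup>2)"
    by (simp only: integral_mult_right_zero)
  also have "\<dots> \<le> (c\<^sup>2 + 1) * (LINT x|lborel. (f x - g x)\<^sup>2)"
    by (intro mult_right_mono integral_nonneg_AE) auto
  also have "\<dots> < (c\<^sup>2 + 1) * (e / (c\<^sup>2 + 1))"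
    using g(2) c by (rule mult_strict_left_mono)
  also have "\<dots> = e"
    using c by simp
  finally have "(LINT x|lborel. (c * f x - c * g x)\<^sup>2) < e" .
  moreover have "(\<lambda>x. c * g x) \<in> V"
    using g(1) by (rule scale_mem)
  ultimately show "\<exists>h\<in>V. (LINT x|lborel. (c * f x - h x)\<^sup>2) < e"
    by (rule bexI)
qed

lemma approximable_sum:
  "finite A \<Longrightarrow> (\<And>i. i \<in> A \<Longrightarrow> approximable (f i)) \<Longrightarrow> approximable (\<lambda>x. \<Sum>i\<in>A. f i x)"
  by (induction A rule: finite_induct) (simp_all add: approximable_add approximable_mem zero_mem)

end

locale l2_dyadic_subspace = l2_subspace +
  assumes dyadic_indicator_mem: "indicator (dyadic_interval n k) \<in> V"
begin

lemma approximable_indicator_open: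
  assumes "open U" "emeasure lborel U < \<infinity>"
  shows "approximable (indicator U)"
proof (rule approximable_limit)
  show "square_integrable (indicator U)"
    using assms by (intro square_integrable_indicator) auto
  fix e :: real assume "e > 0"
  then have "ennreal e > 0" by simp
  then obtain n where n: "emeasure lborel (U - dyadic_inner n U) < e"
    using emeasure_diff_dyadic_inner_small[OF assms] by blast
  have "(\<lambda>x. \<Sum>k\<in>dyadic_indices n U. indicator (dyadic_interval n k) x) \<in> V"
    by (rule sum_mem[OF finite_dyadic_indices dyadic_indicator_mem])
  then have mem: "indicator (dyadic_inner n U) \<in> V"
    unfolding indicator_dyadic_inner[symmetric] .
  have fin: "emeasure lborel (U - dyadic_inner n U) < \<infinity>"
    using order.strict_trans[OF n ennreal_less_top] by simp
  have "(indicator U x - indicator (dyadic_inner n U) x :: real)\<^sup>2 = indicator (U - dyadic_inner n U) x" for x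
    using dyadic_inner_subset[of n U] by (auto simp: indicator_def)
  then have "(LINT x|lborel. (indicator U x - indicator (dyadic_inner n U) x)\<^sup>2)
      = measure lborel (U - dyadic_inner n U)"
    using assms(1) fin by simp
  also have "\<dots> < e"
    using n fin by (simp add: measure_def)
  finally show "\<exists>h. approximable h \<and> (LINT x|lborel. (indicator U x - h x)\<^sup>2) < e"
    using approximable_mem[OF mem] by (intro exI conjI)
qed


lemma approximable_indicator:
  assumes A: "A \<in> sets lborel" "emeasure lborel A < \<infinity>"
  shows "approximable (indicator A)"
proof (rule approximable_limit)
  show "square_integrable (indicator A)"
    using A by (rule square_integrable_indicator)
  fix e :: real assume "e > 0"
  then obtain U where U: "open U" "A \<subseteq> U" "emeasure lborel (U - A) < e"
    using outer_regular_lborel[of A e] A(1) by auto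
  have U_A_fin: "emeasure lborel (U - A) < \<infinity>"
    using order.strict_trans[OF U(3) ennreal_less_top] by simp
  have "emeasure lborel U \<le> emeasure lborel A + emeasure lborel (U - A)"
    using emeasure_subadditive[of A lborel "U - A"] A(1) U(1,2)
    by (simp add: Un_absorb1 Un_Diff_cancel)
  also have "\<dots> < \<infinity>"
    using A(2) U_A_fin by (simp add: ennreal_add_less_top)
  finally have "approximable (indicator U)"
    using U(1) by (intro approximable_indicator_open)
  moreover have "(indicator A x - indicator U x :: real)\<^sup>2 = indicator (U - A) x" for x
    using U(2) by (auto simp: indicator_def)
  then have "(LINT x|lborel. (indicator A x - indicator U x)\<^sup>2) = measure lborel (U - A)"
    using U(1) A(1) U_A_fin by simp
  moreover have "measure lborel (U - A) < e"
    using U(3) U_A_fin by (simp add: measure_def)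
  ultimately show "\<exists>h. approximable h \<and> (LINT x|lborel. (indicator A x - h x)\<^sup>2) < e"
    by (intro exI[of _ "indicator U"]) simp
qed

lemma approximable_simple_function:
  assumes s: "simple_function lborel s" "square_integrable s"
  shows "approximable s"
proof -
  have level: "approximable (\<lambda>x. y * indicator (s -` {y}) x)" for y
  proof (cases "y = 0")
    case False
    have sets: "s -` {y} \<in> sets lborel"
      using simple_functionD(2)[OF s(1), of "{y}"] by simp
    have "integrable lborel (indicator (s -` {y}) :: real \<Rightarrow> real)"
    proof (rule Bochner_Integration.integrable_bound)
      show "integrable lborel (\<lambda>x. (s x)\<^sup>2 / y\<^sup>2)"
        using s(2) by (simp add: square_integrable_def)
      have "indicator (s -` {y}) x \<le> (s x)\<^sup>2 / y\<^sup>2" for x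
        using False by (cases "s x = y") (simp_all add: indicator_def)
      then show "AE x in lborel. norm (indicator (s -` {y}) x :: real) \<le> norm ((s x)\<^sup>2 / y\<^sup>2)"
        by simp
    qed (use sets in simp)
    then have "approximable (indicator (s -` {y}))"
      using sets by (intro approximable_indicator) (simp_all add: integrable_indicator_iff)
    then show ?thesis by (rule approximable_scale)
  qed (simp add: approximable_mem zero_mem)
  have "approximable (\<lambda>x. \<Sum>y\<in>s ` UNIV. y * indicator (s -` {y}) x)"
    using simple_functionD(1)[OF s(1)] level
    by (intro approximable_sum[where f="\<lambda>y x. y * indicator (s -` {y}) x"]) simp_all
  moreover have "(\<Sum>y\<in>s ` UNIV. y * indicator (s -` {y}) x) = s x" for x
  proof -
    have "(\<Sum>y\<in>s ` UNIV. indicator (s -` {y}) x * y) = s x"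
      using simple_function_indicator_representation_banach[OF s(1), of x, symmetric] by simp
    then show ?thesis by (simp add: mult.commute)
  qed
  ultimately show ?thesis by simp
qed

lemma approximable_square_integrable:
  assumes f: "square_integrable f"
  shows "approximable f"
proof -
  obtain F where F: "\<And>i. simple_function lborel (F i)" "\<And>x. (\<lambda>i. F i x) \<longlonglongrightarrow> f x"
      "\<And>i x. \<bar>F i x\<bar> \<le> 2 * \<bar>f x\<bar>"
    using borel_measurable_implies_sequence_metric[OF square_integrable_measurable[OF f], of 0]
    by (auto simp: dist_real_def)
  have [measurable]: "F i \<in> borel_measurable lborel" for i
    using F(1) by (rule borel_measurable_simple_function)
  have bound: "(f x - F i x)\<^sup>2 \<le> 9 * (f x)\<^sup>2" for i x
  proof -
    have "\<bar>f x - F i x\<bar> \<le> \<bar>3 * f x\<bar>"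
      using F(3)[of i x] by linarith
    then show ?thesis
      using power_mono[of "\<bar>f x - F i x\<bar>" "\<bar>3 * f x\<bar>" 2] by (simp add: power_mult_distrib)
  qed
  have "(\<lambda>i. (f x - F i x)\<^sup>2) \<longlonglongrightarrow> (f x - f x)\<^sup>2" for x
    by (intro tendsto_power tendsto_diff tendsto_const F(2))
  moreover have "(\<lambda>x. (f x - F i x)\<^sup>2) \<in> borel_measurable lborel" for i
    using f by measurable
  ultimately have lim: "(\<lambda>i. LINT x|lborel. (f x - F i x)\<^sup>2) \<longlonglongrightarrow> 0"
    using f bound integral_dominated_convergence[where M=lborel and f="\<lambda>x. 0"
        and s="\<lambda>i x. (f x - F i x)\<^sup>2" and w="\<lambda>x. 9 * (f x)\<^sup>2"]
    by (simp add: square_integrable_def)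
  show ?thesis
  proof (rule approximable_limit[OF f])
    fix e :: real assume "e > 0"
    with lim have "eventually (\<lambda>i. (LINT x|lborel. (f x - F i x)\<^sup>2) < e) sequentially"
      by (rule order_tendstoD(2))
    then obtain i where i: "(LINT x|lborel. (f x - F i x)\<^sup>2) < e"
      by (auto simp: eventually_sequentially)
    have "integrable lborel (\<lambda>x. (F i x)\<^sup>2)"
    proof (rule Bochner_Integration.integrable_bound)
      show "integrable lborel (\<lambda>x. 4 * (f x)\<^sup>2)"
        using f by (simp add: square_integrable_def)
      have "(F i x)\<^sup>2 \<le> 4 * (f x)\<^sup>2" for x
        using power_mono[OF F(3)[of i x], of 2] by (simp add: power_mult_distrib)
      then show "AE x in lborel. norm ((F i x)\<^sup>2) \<le> norm (4 * (f x)\<^sup>2)"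
        by simp
    qed simp
    then have "approximable (F i)"
      using F(1) by (intro approximable_simple_function) (simp_all add: square_integrable_def)
    with i show "\<exists>h. approximable h \<and> (LINT x|lborel. (f x - h x)\<^sup>2) < e"
      by (intro exI conjI)
  qed
qed

theorem dense_in_L2:
  assumes "square_integrable f" "e > 0"
  shows "\<exists>g\<in>V. (LINT x|lborel. (f x - g x)\<^sup>2) < e"
  using approximable_square_integrable[OF assms(1)] assms(2) by (simp add: approximable_def)

end

section \<open>Explicit form of the wavelets\<close>

lemma deriv_eq_locally:
  assumes "open S" "x \<in> S" "\<And>y. y \<in> S \<Longrightarrow> f y = g y"
  shows "deriv f x = deriv g x"
proof -
  have "eventually (\<lambda>y. f y = g y) (nhds x)"
    using assms by (auto simp: eventually_nhds)
  then show ?thesis by (rule deriv_cong_ev) simp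
qed

lemma deriv2_eq_locally:
  assumes S: "open S" "x \<in> S" "\<And>y. y \<in> S \<Longrightarrow> f y = g y"
    and g': "\<And>y. (g has_real_derivative g' y) (at y)"
    and g'': "\<And>y. (g' has_real_derivative g'' y) (at y)"
  shows "deriv (deriv f) x = g'' x"
proof -
  have "deriv (deriv f) x = deriv (deriv g) x"
    using S by (intro deriv_eq_locally[of S]) (auto intro: deriv_eq_locally)
  also have "deriv g = g'"
    using g' by (auto intro!: DERIV_imp_deriv)
  finally show ?thesis
    using g'' by (simp add: DERIV_imp_deriv)
qed

definition rpsi_piecewise :: "nat \<Rightarrow> real \<Rightarrow> real" where
  "rpsi_piecewise l y =
     (if 0 < y \<and> y < 1/2 then (if l = 1 then sqrt 3 * (1 - 4*y) else 6*y - 1)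
      else if 1/2 < y \<and> y < 1 then (if l = 1 then sqrt 3 * (4*y - 3) else 6*y - 5)
      else 0)"

lemma hpsi_deriv2_outside:
  assumes "y < 0 \<or> 1 < y"
  shows "deriv (deriv (hpsi l)) y = 0"
  using assms
proof
  assume "y < 0"
  then show ?thesis
    by (intro deriv2_eq_locally[of "{..<0}" _ _ "\<lambda>_. 0" "\<lambda>_. 0"])
      (auto simp: hpsi_def hphi_def)
next
  assume "1 < y"
  then show ?thesis
    by (intro deriv2_eq_locally[of "{1<..}" _ _ "\<lambda>_. 0" "\<lambda>_. 0"])
      (auto simp: hpsi_def hphi_def)
qed

lemma hpsi_deriv2_left:
  assumes "0 < y" "y < 1/2"
  shows "deriv (deriv (hpsi l)) y = (if l = 1 then 24 - 96*y else 48*y - 8)"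
proof (cases "l = 1")
  case True
  have "deriv (deriv (hpsi l)) y = (\<lambda>x. 24 - 96*x) y"
    by (rule deriv2_eq_locally[of "{0<..<1/2}" _ _ "\<lambda>x. 12*x^2 - 16*x^3" "\<lambda>x. 24*x - 48*x^2"])
      (use assms True in \<open>auto intro!: derivative_eq_intros
        simp: hpsi_def hphi_def power2_eq_square power3_eq_cube algebra_simps\<close>)
  then show ?thesis using True by simp
next
  case False
  have "deriv (deriv (hpsi l)) y = (\<lambda>x. 48*x - 8) y"
    by (rule deriv2_eq_locally[of "{0<..<1/2}" _ _ "\<lambda>x. 8*x^3 - 4*x^2" "\<lambda>x. 24*x^2 - 8*x"])
      (use assms False in \<open>auto intro!: derivative_eq_intros
        simp: hpsi_def hphi_def power2_eq_square power3_eq_cube algebra_simps\<close>)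
  then show ?thesis using False by simp
qed

lemma hpsi_deriv2_right:
  assumes "1/2 < y" "y < 1"
  shows "deriv (deriv (hpsi l)) y = (if l = 1 then 96*y - 72 else 48*y - 40)"
proof (cases "l = 1")
  case True
  have "deriv (deriv (hpsi l)) y = (\<lambda>x. 96*x - 72) y"
    by (rule deriv2_eq_locally[of "{1/2<..<1}" _ _ "\<lambda>x. 4*(1-x)^2*(4*x-1)"
          "\<lambda>x. 4*(-2*(1-x)*(4*x-1) + 4*(1-x)^2)"])
      (use assms True in \<open>auto intro!: derivative_eq_intros
        simp: hpsi_def hphi_def power2_eq_square power3_eq_cube algebra_simps\<close>)
  then show ?thesis using True by simp
next
  case False
  have "deriv (deriv (hpsi l)) y = (\<lambda>x. 48*x - 40) y"
    by (rule deriv2_eq_locally[of "{1/2<..<1}" _ _ "\<lambda>x. 4*(1-x)^2*(2*x-1)"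
          "\<lambda>x. 4*(-2*(1-x)*(2*x-1) + 2*(1-x)^2)"])
      (use assms False in \<open>auto intro!: derivative_eq_intros
        simp: hpsi_def hphi_def power2_eq_square power3_eq_cube algebra_simps\<close>)
  then show ?thesis using False by simp
qed

lemma rpsi_eq_piecewise:
  assumes "y \<notin> {0, 1/2, 1}"
  shows "rpsi l y = rpsi_piecewise l y"
proof -
  consider "y < 0 \<or> 1 < y" | "0 < y" "y < 1/2" | "1/2 < y" "y < 1"
    using assms by fastforce
  then show ?thesis
  proof cases
    case 1
    then show ?thesis
      by (auto simp: rpsi_def rpsi_piecewise_def hpsi_deriv2_outside)
  next
    case 2
    then show ?thesis
      by (simp add: rpsi_def rpsi_piecewise_def hpsi_deriv2_left algebra_simps)
  next
    case 3
    then show ?thesis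
      by (simp add: rpsi_def rpsi_piecewise_def hpsi_deriv2_right algebra_simps)
  qed
qed

lemma rpsi_measurable [measurable]: "rpsi l \<in> borel_measurable borel"
proof (rule measurable_discrete_difference[where X="{0, 1/2, 1}"])
  show "rpsi_piecewise l \<in> borel_measurable borel"
    unfolding rpsi_piecewise_def by measurable
qed (auto simp: rpsi_eq_piecewise)

lemma rphi_measurable [measurable]: "rphi l \<in> borel_measurable borel"
  unfolding rphi_def by measurable

lemma rpsi_outside: "y < 0 \<or> 1 < y \<Longrightarrow> rpsi l y = 0"
  by (subst rpsi_eq_piecewise) (auto simp: rpsi_piecewise_def)

lemma rpsi_left: "0 < y \<Longrightarrow> y < 1/2 \<Longrightarrow> rpsi l y = (if l = 1 then sqrt 3 * (1 - 4*y) else 6*y - 1)"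
  by (subst rpsi_eq_piecewise) (auto simp: rpsi_piecewise_def)

lemma rpsi_right: "1/2 < y \<Longrightarrow> y < 1 \<Longrightarrow> rpsi l y = (if l = 1 then sqrt 3 * (4*y - 3) else 6*y - 5)"
  by (subst rpsi_eq_piecewise) (auto simp: rpsi_piecewise_def)

lemma rphi_outside: "y < 0 \<or> 1 < y \<Longrightarrow> rphi l y = 0"
  by (auto simp: rphi_def)

lemma rphi_inside: "0 \<le> y \<Longrightarrow> y \<le> 1 \<Longrightarrow> rphi l y = (if l = 1 then 1 else sqrt 3 * (2*y - 1))"
  by (simp add: rphi_def)

section \<open>Orthonormality\<close>

lemma integral_quadratic_Icc:
  fixes c0 c1 c2 :: real
  assumes "u \<le> v"
  shows "(LINT y|lborel. (c0 + c1*y + c2*y\<^sup>2) * indicator {u..v} y)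
    = c0*(v - u) + c1*(v\<^sup>2 - u\<^sup>2)/2 + c2*(v^3 - u^3)/3"
proof -
  have "(LINT y|lborel. (c0 + c1*y + c2*y\<^sup>2) * indicator {u..v} y)
      = (\<lambda>y. c0*y + c1*y\<^sup>2/2 + c2*y^3/3) v - (\<lambda>y. c0*y + c1*y\<^sup>2/2 + c2*y^3/3) u"
    by (rule integral_FTC_Icc_real[OF assms])
      (auto intro!: derivative_eq_intros simp: power2_eq_square power3_eq_cube algebra_simps)
  then show ?thesis by (simp add: field_simps)
qed

lemma integral_piecewise_quadratic:
  fixes h :: "real \<Rightarrow> real"
  assumes left: "\<And>y. 0 < y \<Longrightarrow> y < 1/2 \<Longrightarrow> h y = c0 + c1*y + c2*y\<^sup>2"
    and right: "\<And>y. 1/2 < y \<Longrightarrow> y < 1 \<Longrightarrow> h y = d0 + d1*y + d2*y\<^sup>2"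
    and outside: "\<And>y. y < 0 \<or> 1 < y \<Longrightarrow> h y = 0"
  shows "(LINT y|lborel. h y) = (c0/2 + c1/8 + c2/24) + (d0/2 + d1*3/8 + d2*7/24)"
proof -
  define g where "g y = (c0 + c1*y + c2*y\<^sup>2) * indicator {0..1/2} y
    + (d0 + d1*y + d2*y\<^sup>2) * indicator {1/2..1} y" for y :: real
  have [measurable]: "g \<in> borel_measurable borel"
    unfolding g_def by measurable
  have g_eq: "g y = h y" if "y \<notin> {0, 1/2, 1}" for y
  proof -
    have "y \<noteq> 0" "y \<noteq> 1/2" "y \<noteq> 1"
      using that by auto
    then consider "y < 0 \<or> 1 < y" | "0 < y" "y < 1/2" | "1/2 < y" "y < 1"
      by linarith
    then show ?thesis
      by cases (auto simp: g_def left right outside indicator_def)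
  qed
  have [measurable]: "h \<in> borel_measurable borel"
    by (rule measurable_discrete_difference[where f=g and X="{0, 1/2, 1}"]) (use g_eq in auto)
  have ae: "AE y in lborel. h y = g y"
    using AE_lborel_singleton[of 0] AE_lborel_singleton[of "1/2"] AE_lborel_singleton[of 1]
    by eventually_elim (use g_eq in auto)
  have int1: "integrable lborel (\<lambda>y. (c0 + c1*y + c2*y\<^sup>2) * indicator {0..1/2} y)"
    and int2: "integrable lborel (\<lambda>y. (d0 + d1*y + d2*y\<^sup>2) * indicator {1/2..1} y)"
    by (auto intro: borel_integrable_atLeastAtMost)
  have "(LINT y|lborel. h y) = (LINT y|lborel. g y)"
    using ae by (intro integral_cong_AE) auto
  also have "\<dots> = (c0/2 + c1/8 + c2/24) + (d0/2 + d1*3/8 + d2*7/24)"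
    using int1 int2 by (simp add: g_def integral_quadratic_Icc power3_eq_cube) (simp add: power2_eq_square)
  finally show ?thesis .
qed

lemma rpsi_orthogonal_affine:
  assumes B: "\<And>y. 0 < y \<Longrightarrow> y < 1 \<Longrightarrow> B y = a*y + b"
  shows "(LINT y|lborel. rpsi l y * B y) = 0"
proof (cases "l = 1")
  case True
  have "(LINT y|lborel. rpsi l y * B y)
      = (sqrt 3*b/2 + sqrt 3*(a - 4*b)/8 + (-4 * sqrt 3*a)/24)
        + (-3 * sqrt 3*b/2 + sqrt 3*(4*b - 3*a)*3/8 + 4 * sqrt 3*a*7/24)"
    by (rule integral_piecewise_quadratic)
      (use True in \<open>auto simp: rpsi_left rpsi_right rpsi_outside B algebra_simps power2_eq_square\<close>)
  then show ?thesis by (simp add: field_simps)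
next
  case False
  have "(LINT y|lborel. rpsi l y * B y)
      = (-b/2 + (6*b - a)/8 + 6*a/24) + (-5*b/2 + (6*b - 5*a)*3/8 + 6*a*7/24)"
    by (rule integral_piecewise_quadratic)
      (use False in \<open>auto simp: rpsi_left rpsi_right rpsi_outside B algebra_simps power2_eq_square\<close>)
  then show ?thesis by (simp add: field_simps)
qed

lemma rpsi_inner_rpsi:
  assumes "l \<in> {1, 2}" "l' \<in> {1, 2}"
  shows "(LINT y|lborel. rpsi l y * rpsi l' y) = (if l = l' then 1 else 0)"
proof -
  have sqrt3: "sqrt 3 * sqrt 3 = (3::real)" by simp
  consider "l = 1" "l' = 1" | "l = 1" "l' = 2" | "l = 2" "l' = 1" | "l = 2" "l' = 2"
    using assms by auto
  then show ?thesis
  proof cases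
    case 1
    have "(LINT y|lborel. rpsi l y * rpsi l' y) = (3/2 + (-24)/8 + 48/24) + (27/2 + (-72)*3/8 + 48*7/24)"
      by (rule integral_piecewise_quadratic)
        (use 1 in \<open>auto simp: rpsi_left rpsi_right rpsi_outside algebra_simps power2_eq_square sqrt3\<close>)
    then show ?thesis using 1 by simp
  next
    case 2
    have "(LINT y|lborel. rpsi l y * rpsi l' y)
        = (-sqrt 3/2 + 10 * sqrt 3/8 + (-24 * sqrt 3)/24) + (15 * sqrt 3/2 + (-38 * sqrt 3)*3/8 + 24 * sqrt 3*7/24)"
      by (rule integral_piecewise_quadratic)
        (use 2 in \<open>auto simp: rpsi_left rpsi_right rpsi_outside algebra_simps power2_eq_square\<close>)
    then show ?thesis using 2 by (simp add: field_simps)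
  next
    case 3
    have "(LINT y|lborel. rpsi l y * rpsi l' y)
        = (-sqrt 3/2 + 10 * sqrt 3/8 + (-24 * sqrt 3)/24) + (15 * sqrt 3/2 + (-38 * sqrt 3)*3/8 + 24 * sqrt 3*7/24)"
      by (rule integral_piecewise_quadratic)
        (use 3 in \<open>auto simp: rpsi_left rpsi_right rpsi_outside algebra_simps power2_eq_square\<close>)
    then show ?thesis using 3 by (simp add: field_simps)
  next
    case 4
    have "(LINT y|lborel. rpsi l y * rpsi l' y) = (1/2 + (-12)/8 + 36/24) + (25/2 + (-60)*3/8 + 36*7/24)"
      by (rule integral_piecewise_quadratic)
        (use 4 in \<open>auto simp: rpsi_left rpsi_right rpsi_outside algebra_simps power2_eq_square\<close>)
    then show ?thesis using 4 by simp
  qed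
qed

lemma rphi_inner_affine:
  assumes B: "\<And>y. 0 < y \<Longrightarrow> y < 1 \<Longrightarrow> B y = a*y + b"
  shows "(LINT y|lborel. rphi l y * B y) = (if l = 1 then a/2 + b else sqrt 3 * a / 6)"
proof (cases "l = 1")
  case True
  have "(LINT y|lborel. rphi l y * B y) = (b/2 + a/8 + 0/24) + (b/2 + a*3/8 + 0*7/24)"
    by (rule integral_piecewise_quadratic)
      (use True in \<open>auto simp: rphi_inside rphi_outside B algebra_simps\<close>)
  then show ?thesis using True by simp
next
  case False
  have "(LINT y|lborel. rphi l y * B y)
      = (-sqrt 3*b/2 + sqrt 3*(2*b - a)/8 + 2 * sqrt 3*a/24) + (-sqrt 3*b/2 + sqrt 3*(2*b - a)*3/8 + 2 * sqrt 3*a*7/24)"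
    by (rule integral_piecewise_quadratic)
      (use False in \<open>auto simp: rphi_inside rphi_outside B algebra_simps power2_eq_square\<close>)
  then show ?thesis using False by (simp add: field_simps)
qed

definition dyadic_affine :: "nat \<Rightarrow> (real \<Rightarrow> real) \<Rightarrow> bool" where
  "dyadic_affine d g \<longleftrightarrow>
     (\<forall>m::int. \<exists>a b. \<forall>y. 0 < y \<and> y < 1 \<longrightarrow> g ((real_of_int m + y) / 2^d) = a * y + b)"

lemma affine_on_subinterval:
  fixes c m p q :: real
  assumes "c > 0" "p * c \<le> m" "m + 1 \<le> q * c"
    and f: "\<And>t. p < t \<Longrightarrow> t < q \<Longrightarrow> f t = \<alpha> * t + \<beta>"
  shows "\<exists>a b. \<forall>y. 0 < y \<and> y < 1 \<longrightarrow> f ((m + y) / c) = a * y + b"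
proof (intro exI allI impI)
  fix y :: real assume "0 < y \<and> y < 1"
  then have "p < (m + y) / c" "(m + y) / c < q"
    using assms(1-3) by (simp_all add: field_simps)
  then show "f ((m + y) / c) = \<alpha> / c * y + (\<alpha> * m / c + \<beta>)"
    by (simp add: f add_divide_distrib algebra_simps)
qed

lemma dyadic_affine_rphi: "dyadic_affine d (rphi l)"
  unfolding dyadic_affine_def
proof
  fix m :: int
  have c: "(2::real)^d > 0" by simp
  have "m + 1 \<le> 0 \<or> 2^d \<le> m \<or> (0 \<le> m \<and> m + 1 \<le> 2^d)" by linarith
  then consider "m + 1 \<le> 0" | "2^d \<le> m" | "0 \<le> m" "m + 1 \<le> 2^d"
    by blast
  then show "\<exists>a b. \<forall>y. 0 < y \<and> y < 1 \<longrightarrow> rphi l ((real_of_int m + y) / 2^d) = a * y + b"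
  proof cases
    case 1
    then show ?thesis
      by (intro affine_on_subinterval[OF c, of "m / 2^d" _ 0 _ 0 0]) (auto simp: rphi_outside)
  next
    case 2
    then have "2^d \<le> real_of_int m" by simp
    then show ?thesis
      by (intro affine_on_subinterval[OF c, of 1 _ "(m + 1) / 2^d" _ 0 0]) (auto simp: rphi_outside)
  next
    case 3
    then have "real_of_int (m + 1) \<le> 2^d"
      by (simp only: of_int_le_numeral_power_cancel_iff)
    with 3 show ?thesis
      by (intro affine_on_subinterval[OF c, of 0 _ 1 _ "if l = 1 then 0 else 2 * sqrt 3"
            "if l = 1 then 1 else - sqrt 3"])
        (auto simp: rphi_inside algebra_simps)
  qed
qed

lemma dyadic_affine_rpsi:
  assumes "d \<ge> 1"
  shows "dyadic_affine d (rpsi l)"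
  unfolding dyadic_affine_def
proof
  fix m :: int
  obtain e where d: "d = Suc e" using assms by (cases d) auto
  have c: "(2::real)^d > 0" by simp
  have "m + 1 \<le> 0 \<or> 2^d \<le> m \<or> (0 \<le> m \<and> m + 1 \<le> 2^e) \<or> (2^e \<le> m \<and> m + 1 \<le> 2^d)"
    using d by auto
  then consider "m + 1 \<le> 0" | "2^d \<le> m" | "0 \<le> m" "m + 1 \<le> 2^e" | "2^e \<le> m" "m + 1 \<le> 2^d"
    by blast
  then show "\<exists>a b. \<forall>y. 0 < y \<and> y < 1 \<longrightarrow> rpsi l ((real_of_int m + y) / 2^d) = a * y + b"
  proof cases
    case 1
    then show ?thesis
      by (intro affine_on_subinterval[OF c, of "m / 2^d" _ 0 _ 0 0]) (auto simp: rpsi_outside)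
  next
    case 2
    then have "2^d \<le> real_of_int m" by simp
    then show ?thesis
      by (intro affine_on_subinterval[OF c, of 1 _ "(m + 1) / 2^d" _ 0 0]) (auto simp: rpsi_outside)
  next
    case 3
    then have "real_of_int (m + 1) \<le> 2^e"
      by (simp only: of_int_le_numeral_power_cancel_iff)
    with 3 d show ?thesis
      by (intro affine_on_subinterval[OF c, of 0 _ "1/2" _ "if l = 1 then - 4 * sqrt 3 else 6"
            "if l = 1 then sqrt 3 else - 1"])
        (auto simp: rpsi_left algebra_simps)
  next
    case 4
    then have "real_of_int (m + 1) \<le> 2^d" "2^e \<le> real_of_int m"
      by (simp_all only: of_int_le_numeral_power_cancel_iff numeral_power_le_of_int_cancel_iff)
    with d show ?thesis
      by (intro affine_on_subinterval[OF c, of "1/2" _ 1 _ "if l = 1 then 4 * sqrt 3 else 6"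
            "if l = 1 then - 3 * sqrt 3 else - 5"])
        (auto simp: rpsi_right algebra_simps)
  qed
qed

lemma dyadic_affine_dilate_translate:
  assumes "dyadic_affine d g"
  shows "dyadic_affine (j + d) (\<lambda>x. c * g (2^j * x - real_of_int k))"
  unfolding dyadic_affine_def
proof
  fix m :: int
  obtain a b where ab: "\<And>y. 0 < y \<Longrightarrow> y < 1 \<Longrightarrow>
      g ((real_of_int (m - k * 2^d) + y) / 2^d) = a * y + b"
    using assms unfolding dyadic_affine_def by blast
  have "2^j * ((real_of_int m + y) / 2^(j + d)) - real_of_int k
      = (real_of_int (m - k * 2^d) + y) / 2^d" for y
    by (simp add: power_add field_simps)
  then show "\<exists>a b. \<forall>y. 0 < y \<and> y < 1 \<longrightarrow>
      c * g (2^j * ((real_of_int m + y) / 2^(j + d)) - real_of_int k) = a * y + b"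
    using ab by (intro exI[of _ "c * a"] exI[of _ "c * b"]) (simp add: algebra_simps)
qed

lemma wav_system_Inl: "wav_system (Inl (l, k)) = (\<lambda>x. rphi l (x - real_of_int k))"
  by (rule ext) (simp add: wav_system_def)

lemma wav_system_Inr:
  "wav_system (Inr (j, k, l)) = (\<lambda>x. 2 powr (real j / 2) * rpsi l (2^j * x - real_of_int k))"
  by (rule ext) (simp add: wav_system_def)

lemma dyadic_affine_wav_system_Inl: "dyadic_affine j (wav_system (Inl (l, k)))"
  using dyadic_affine_dilate_translate[OF dyadic_affine_rphi, where j=0 and c=1]
  by (simp add: wav_system_Inl)

lemma dyadic_affine_wav_system_Inr:
  assumes "j' < j"
  shows "dyadic_affine j (wav_system (Inr (j', k, l)))"
  using dyadic_affine_dilate_translate[OF dyadic_affine_rpsi[of "j - j'"], where j=j'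
      and c="2 powr (real j' / 2)"] assms
  by (simp add: wav_system_Inr)

lemma integral_substitution_affine:
  fixes f g :: "real \<Rightarrow> real"
  assumes "c > 0"
  shows "(LINT x|lborel. f (c * x - t) * g x) = (LINT y|lborel. f y * g ((y + t) / c)) / c"
proof -
  have arg: "c * (t / c + 1 / c * y) - t = y" "t / c + 1 / c * y = (y + t) / c" for y
    using assms by (simp_all add: field_simps)
  have "(LINT x|lborel. f (c * x - t) * g x)
      = \<bar>1 / c\<bar> *\<^sub>R (LINT y|lborel. f (c * (t / c + 1 / c * y) - t) * g (t / c + 1 / c * y))"
    using assms by (intro lborel_integral_real_affine[where c="1 / c" and t="t / c"]) simp
  also have "\<dots> = (LINT y|lborel. f y * g ((y + t) / c)) / c"
    using assms by (simp only: arg) simp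
  finally show ?thesis .
qed

lemma L2_inner_wav_system_Inr:
  "L2_inner (wav_system (Inr (j, k, l))) g
    = 2 powr (real j / 2) / 2^j * (LINT y|lborel. rpsi l y * g ((y + real_of_int k) / 2^j))"
proof -
  have "L2_inner (wav_system (Inr (j, k, l))) g
      = 2 powr (real j / 2) * (LINT x|lborel. rpsi l (2^j * x - real_of_int k) * g x)"
    by (simp add: L2_inner_def wav_system_Inr mult.assoc)
  also have "(LINT x|lborel. rpsi l (2^j * x - real_of_int k) * g x)
      = (LINT y|lborel. rpsi l y * g ((y + real_of_int k) / 2^j)) / 2^j"
    by (rule integral_substitution_affine) simp
  finally show ?thesis by simp
qed

lemma L2_inner_wav_system_Inl:
  "L2_inner (wav_system (Inl (l, k))) g = (LINT y|lborel. rphi l y * g (y + real_of_int k))"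
  using integral_substitution_affine[where c=1 and f="rphi l" and g=g and t="real_of_int k"]
  by (simp add: L2_inner_def wav_system_Inl)

lemma L2_inner_wavelet_dyadic_affine:
  assumes "dyadic_affine j g"
  shows "L2_inner (wav_system (Inr (j, k, l))) g = 0"
proof -
  obtain a b where "\<And>y. 0 < y \<Longrightarrow> y < 1 \<Longrightarrow> g ((real_of_int k + y) / 2^j) = a * y + b"
    using assms unfolding dyadic_affine_def by blast
  then have "(LINT y|lborel. rpsi l y * g ((y + real_of_int k) / 2^j)) = 0"
    by (intro rpsi_orthogonal_affine) (simp add: add.commute)
  then show ?thesis by (simp add: L2_inner_wav_system_Inr)
qed

lemma L2_inner_wavelet_same_level:
  assumes "l \<in> {1, 2}" "l' \<in> {1, 2}"
  shows "L2_inner (wav_system (Inr (j, k, l))) (wav_system (Inr (j, k', l')))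
    = (if k = k' \<and> l = l' then 1 else 0)"
proof -
  have scale: "2 powr (real j / 2) * (2 powr (real j / 2) * x) = (2::real)^j * x" for x
    by (simp add: powr_add[symmetric] powr_realpow flip: mult.assoc)
  have "L2_inner (wav_system (Inr (j, k, l))) (wav_system (Inr (j, k', l')))
      = 2 powr (real j / 2) / 2^j
        * (LINT y|lborel. rpsi l y * wav_system (Inr (j, k', l')) ((y + real_of_int k) / 2^j))"
    by (rule L2_inner_wav_system_Inr)
  also have "(\<lambda>y. rpsi l y * wav_system (Inr (j, k', l')) ((y + real_of_int k) / 2^j))
      = (\<lambda>y. 2 powr (real j / 2) * (rpsi l y * rpsi l' (y + real_of_int (k - k'))))"
    by (simp add: wav_system_Inr fun_eq_iff add_diff_eq)
  also have "2 powr (real j / 2) / 2^j * (LINT y|lborel. 2 powr (real j / 2)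
      * (rpsi l y * rpsi l' (y + real_of_int (k - k'))))
      = (LINT y|lborel. rpsi l y * rpsi l' (y + real_of_int (k - k')))"
    by (simp add: scale)
  also have "\<dots> = (if k = k' \<and> l = l' then 1 else 0)"
  proof (cases "k = k'")
    case True
    then show ?thesis using rpsi_inner_rpsi[OF assms] by simp
  next
    case False
    then have "real_of_int (k - k') \<le> -1 \<or> 1 \<le> real_of_int (k - k')" by linarith
    then have "rpsi l' (y + real_of_int (k - k')) = 0 * y + 0" if "0 < y" "y < 1" for y
      using that rpsi_outside[of "y + real_of_int (k - k')" l'] by linarith
    then have "(LINT y|lborel. rpsi l y * rpsi l' (y + real_of_int (k - k'))) = 0"
      by (rule rpsi_orthogonal_affine)
    then show ?thesis
      using False by simp
  qed
  finally show ?thesis .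
qed

lemma L2_inner_scaling_functions:
  assumes "l \<in> {1, 2}" "l' \<in> {1, 2}"
  shows "L2_inner (wav_system (Inl (l, k))) (wav_system (Inl (l', k')))
    = (if k = k' \<and> l = l' then 1 else 0)"
proof -
  have "L2_inner (wav_system (Inl (l, k))) (wav_system (Inl (l', k')))
      = (LINT y|lborel. rphi l y * rphi l' (y + real_of_int (k - k')))"
    unfolding L2_inner_wav_system_Inl by (simp add: wav_system_Inl algebra_simps)
  also have "\<dots> = (if k = k' \<and> l = l' then 1 else 0)"
  proof (cases "k = k'")
    case True
    have "rphi l' y = (if l' = 1 then 0 else 2 * sqrt 3) * y + (if l' = 1 then 1 else - sqrt 3)"
      if "0 < y" "y < 1" for y
      using that by (simp add: rphi_inside algebra_simps)
    then have "(LINT y|lborel. rphi l y * rphi l' y)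
        = (if l = 1 then (if l' = 1 then 0 else 2 * sqrt 3) / 2 + (if l' = 1 then 1 else - sqrt 3)
           else sqrt 3 * (if l' = 1 then 0 else 2 * sqrt 3) / 6)"
      by (rule rphi_inner_affine)
    then show ?thesis
      using True assms by auto
  next
    case False
    then have "real_of_int (k - k') \<le> -1 \<or> 1 \<le> real_of_int (k - k')" by linarith
    then have "rphi l' (y + real_of_int (k - k')) = 0 * y + 0" if "0 < y" "y < 1" for y
      using that rphi_outside[of "y + real_of_int (k - k')" l'] by linarith
    then have "(LINT y|lborel. rphi l y * rphi l' (y + real_of_int (k - k')))
        = (if l = 1 then 0/2 + 0 else sqrt 3 * 0 / 6)"
      by (rule rphi_inner_affine)
    then show ?thesis
      using False by simp
  qed
  finally show ?thesis .
qed

lemma L2_inner_sym: "L2_inner f g = L2_inner g f"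
  by (simp add: L2_inner_def mult.commute)

lemma wav_index_cases:
  assumes "i \<in> wav_index"
  obtains (scaling) l k where "i = Inl (l, k)" "l \<in> {1, 2}"
    | (wavelet) j k l where "i = Inr (j, k, l)" "l \<in> {1, 2}"
  using assms unfolding wav_index_def by blast

lemma orthonormal_wav_system:
  assumes "i \<in> wav_index" "i' \<in> wav_index"
  shows "L2_inner (wav_system i) (wav_system i') = (if i = i' then 1 else 0)"
proof -
  have coarser: "L2_inner (wav_system (Inr (j, k, l))) (wav_system i') = 0"
    if "i' = Inl (l', k') \<or> (i' = Inr (j', k', l') \<and> j' < j)" for i' j k l j' k' l'
    using that by (auto intro: L2_inner_wavelet_dyadic_affine
        dyadic_affine_wav_system_Inl dyadic_affine_wav_system_Inr)
  from assms(1) show ?thesis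
  proof (cases rule: wav_index_cases)
    case i: (scaling l k)
    from assms(2) show ?thesis
    proof (cases rule: wav_index_cases)
      case (scaling l' k')
      then show ?thesis using i by (simp add: L2_inner_scaling_functions)
    next
      case (wavelet j' k' l')
      then show ?thesis using i coarser[of "Inl (l, k)"] by (simp add: L2_inner_sym)
    qed
  next
    case i: (wavelet j k l)
    from assms(2) show ?thesis
    proof (cases rule: wav_index_cases)
      case (scaling l' k')
      then show ?thesis using i coarser by simp
    next
      case (wavelet j' k' l')
      then consider "j' < j" | "j < j'" | "j = j'" by linarith
      then show ?thesis
      proof cases
        case 1
        then show ?thesis using i wavelet coarser by simp
      next
        case 2
        then show ?thesis using i wavelet coarser[of "Inr (j, k, l)"] by (simp add: L2_inner_sym)
      next
        case 3
        then show ?thesis using i wavelet by (simp add: L2_inner_wavelet_same_level)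
      qed
    qed
  qed
qed

section \<open>Completeness\<close>

text \<open>Spans are taken up to equality almost everywhere: \<open>rpsi\<close> is defined through pointwise
  derivatives, so its values at the knots \<open>0, 1/2, 1\<close> are arbitrary.\<close>
definition ae_span :: "'i set \<Rightarrow> ('i \<Rightarrow> real \<Rightarrow> real) \<Rightarrow> (real \<Rightarrow> real) set" where
  "ae_span I e = {g. square_integrable g \<and>
     (\<exists>F c. finite F \<and> F \<subseteq> I \<and> (AE x in lborel. g x = (\<Sum>i\<in>F. c i * e i x)))}"

lemma l2_subspace_ae_span: "l2_subspace (ae_span I e)"
proof
  show "(\<lambda>x. 0) \<in> ae_span I e"
    by (auto simp: ae_span_def square_integrable_def intro!: exI[of _ "{}"])
next
  fix f g assume "f \<in> ae_span I e" "g \<in> ae_span I e"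
  then obtain F c G d where f: "square_integrable f" "finite F" "F \<subseteq> I"
      "AE x in lborel. f x = (\<Sum>i\<in>F. c i * e i x)"
    and g: "square_integrable g" "finite G" "G \<subseteq> I"
      "AE x in lborel. g x = (\<Sum>i\<in>G. d i * e i x)"
    unfolding ae_span_def by blast
  define b where "b i = (if i \<in> F then c i else 0) + (if i \<in> G then d i else 0)" for i
  have sum_eq: "(\<Sum>i\<in>F \<union> G. b i * e i x) = (\<Sum>i\<in>F. c i * e i x) + (\<Sum>i\<in>G. d i * e i x)" for x
  proof -
    have "(\<Sum>i\<in>F \<union> G. b i * e i x)
        = (\<Sum>i\<in>F \<union> G. if i \<in> F then c i * e i x else 0) + (\<Sum>i\<in>F \<union> G. if i \<in> G then d i * e i x else 0)"
      unfolding sum.distrib[symmetric] by (rule sum.cong) (auto simp: b_def distrib_right)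
    also have "\<dots> = (\<Sum>i\<in>F. c i * e i x) + (\<Sum>i\<in>G. d i * e i x)"
      using f(2) g(2) by (simp add: sum.If_cases Int_absorb1 Int_absorb2)
    finally show ?thesis .
  qed
  have "AE x in lborel. f x + g x = (\<Sum>i\<in>F \<union> G. b i * e i x)"
    using f(4) g(4) by eventually_elim (simp add: sum_eq)
  then show "(\<lambda>x. f x + g x) \<in> ae_span I e"
    using f(2,3) g(2,3) square_integrable_add[OF f(1) g(1)] unfolding ae_span_def
    by (intro CollectI conjI exI[of _ "F \<union> G"] exI[of _ b]) auto
next
  fix f and a :: real assume "f \<in> ae_span I e"
  then obtain F c where f: "square_integrable f" "finite F" "F \<subseteq> I"
      "AE x in lborel. f x = (\<Sum>i\<in>F. c i * e i x)"
    unfolding ae_span_def by blast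
  from f(4) have "AE x in lborel. a * f x = (\<Sum>i\<in>F. (a * c i) * e i x)"
    by eventually_elim (simp add: sum_distrib_left mult.assoc)
  then show "(\<lambda>x. a * f x) \<in> ae_span I e"
    using f(2,3) square_integrable_scale[OF f(1)] unfolding ae_span_def
    by (intro CollectI conjI exI[of _ F] exI[of _ "\<lambda>i. a * c i"]) auto
qed (simp add: ae_span_def)

lemma ae_span_member:
  "i \<in> I \<Longrightarrow> square_integrable (e i) \<Longrightarrow> e i \<in> ae_span I e"
  unfolding ae_span_def by (intro CollectI conjI exI[of _ "{i}"] exI[of _ "\<lambda>_. 1"]) auto

lemma ae_span_AE_cong:
  assumes "f \<in> ae_span I e" "g \<in> borel_measurable lborel" "AE x in lborel. g x = f x"
  shows "g \<in> ae_span I e"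
proof -
  obtain F c where f: "square_integrable f" "finite F" "F \<subseteq> I"
      "AE x in lborel. f x = (\<Sum>i\<in>F. c i * e i x)"
    using assms(1) unfolding ae_span_def by blast
  have [measurable]: "f \<in> borel_measurable lborel" "g \<in> borel_measurable lborel"
    using f(1) assms(2) by (auto simp: square_integrable_def)
  have "AE x in lborel. (g x)\<^sup>2 = (f x)\<^sup>2"
    using assms(3) by eventually_elim simp
  then have "integrable lborel (\<lambda>x. (g x)\<^sup>2) \<longleftrightarrow> integrable lborel (\<lambda>x. (f x)\<^sup>2)"
    by (intro integrable_cong_AE) auto
  then have "square_integrable g"
    using f(1) by (simp add: square_integrable_def)
  moreover have "AE x in lborel. g x = (\<Sum>i\<in>F. c i * e i x)"
    using assms(3) f(4) by eventually_elim simp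
  ultimately show ?thesis
    using f(2,3) unfolding ae_span_def by (intro CollectI conjI exI[of _ F] exI[of _ c]) auto
qed

definition box01 :: "real \<Rightarrow> real" where
  "box01 y = (if 0 \<le> y \<and> y \<le> 1 then 1 else 0)"

definition ramp01 :: "real \<Rightarrow> real" where
  "ramp01 y = (if 0 \<le> y \<and> y \<le> 1 then y else 0)"

lemma box01_measurable [measurable]: "box01 \<in> borel_measurable borel"
  unfolding box01_def by measurable

lemma ramp01_measurable [measurable]: "ramp01 \<in> borel_measurable borel"
  unfolding ramp01_def by measurable

text \<open>All four coefficients are written out, in the shape required by
  \<open>dilate_combination_in_span\<close> below.\<close>
lemma two_scale_relations:
  assumes "y \<notin> {0, 1/2, 1}"
  shows "box01 (2*y) = 5/4 * box01 y + (-3/2) * ramp01 y + 0 * rpsi 1 y + 1/4 * rpsi 2 y"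
    and "ramp01 (2*y) = 1/2 * box01 y + (-1/2) * ramp01 y + (-1 / (4 * sqrt 3)) * rpsi 1 y + 1/4 * rpsi 2 y"
    and "box01 (2*y - 1) = (-1/4) * box01 y + 3/2 * ramp01 y + 0 * rpsi 1 y + (-1/4) * rpsi 2 y"
    and "ramp01 (2*y - 1) = (-1/4) * box01 y + 1 * ramp01 y + (1 / (4 * sqrt 3)) * rpsi 1 y + 0 * rpsi 2 y"
proof -
  have "y \<noteq> 0" "y \<noteq> 1/2" "y \<noteq> 1"
    using assms by auto
  then consider "y < 0 \<or> 1 < y" | "0 < y" "y < 1/2" | "1/2 < y" "y < 1"
    by linarith
  then have "box01 (2*y) = 5/4 * box01 y + (-3/2) * ramp01 y + 0 * rpsi 1 y + 1/4 * rpsi 2 y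
    \<and> ramp01 (2*y) = 1/2 * box01 y + (-1/2) * ramp01 y + (-1 / (4 * sqrt 3)) * rpsi 1 y + 1/4 * rpsi 2 y
    \<and> box01 (2*y - 1) = (-1/4) * box01 y + 3/2 * ramp01 y + 0 * rpsi 1 y + (-1/4) * rpsi 2 y
    \<and> ramp01 (2*y - 1) = (-1/4) * box01 y + 1 * ramp01 y + (1 / (4 * sqrt 3)) * rpsi 1 y + 0 * rpsi 2 y"
    by cases (auto simp: rpsi_outside rpsi_left rpsi_right box01_def ramp01_def field_simps)
  then show "box01 (2*y) = 5/4 * box01 y + (-3/2) * ramp01 y + 0 * rpsi 1 y + 1/4 * rpsi 2 y"
    and "ramp01 (2*y) = 1/2 * box01 y + (-1/2) * ramp01 y + (-1 / (4 * sqrt 3)) * rpsi 1 y + 1/4 * rpsi 2 y"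
    and "box01 (2*y - 1) = (-1/4) * box01 y + 3/2 * ramp01 y + 0 * rpsi 1 y + (-1/4) * rpsi 2 y"
    and "ramp01 (2*y - 1) = (-1/4) * box01 y + 1 * ramp01 y + (1 / (4 * sqrt 3)) * rpsi 1 y + 0 * rpsi 2 y"
    by blast+
qed

definition dilate :: "nat \<Rightarrow> int \<Rightarrow> (real \<Rightarrow> real) \<Rightarrow> real \<Rightarrow> real" where
  "dilate n k f x = f (2^n * x - real_of_int k)"

lemma dilate_Suc_even: "dilate (Suc n) (2 * k) f = dilate n k (\<lambda>y. f (2 * y))"
  by (simp add: dilate_def fun_eq_iff algebra_simps)

lemma dilate_Suc_odd: "dilate (Suc n) (2 * k + 1) f = dilate n k (\<lambda>y. f (2 * y - 1))"
  by (simp add: dilate_def fun_eq_iff algebra_simps)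

lemma dilate_measurable [measurable]:
  assumes [measurable]: "f \<in> borel_measurable borel"
  shows "dilate n k f \<in> borel_measurable borel"
  unfolding dilate_def by measurable

lemma AE_lborel_affine_notin:
  fixes S :: "real set"
  assumes "finite S" "c \<noteq> 0"
  shows "AE x in lborel. c * x - t \<notin> S"
proof -
  have "{x. c * x - t \<in> S} \<subseteq> (\<lambda>s. (s + t) / c) ` S"
  proof
    fix x assume "x \<in> {x. c * x - t \<in> S}"
    moreover have "x = ((c * x - t) + t) / c"
      using assms(2) by simp
    ultimately show "x \<in> (\<lambda>s. (s + t) / c) ` S"
      by blast
  qed
  then have "countable {x. c * x - t \<in> S}"
    using assms(1) by (blast intro: countable_subset countable_finite)
  then show ?thesis
    by (intro AE_not_in[where N="{x. c * x - t \<in> S}", simplified] countable_imp_null_set_lborel)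
qed

lemma wav_system_measurable [measurable]: "wav_system i \<in> borel_measurable borel"
  by (cases i) (auto simp: wav_system_Inl wav_system_Inr)

abbreviation wav_span :: "(real \<Rightarrow> real) set" where
  "wav_span \<equiv> ae_span wav_index wav_system"

interpretation wav_span: l2_subspace wav_span
  by (rule l2_subspace_ae_span)

lemma square_integrable_wav_system:
  assumes "i \<in> wav_index"
  shows "square_integrable (wav_system i)"
proof -
  have "L2_inner (wav_system i) (wav_system i) = 1"
    using orthonormal_wav_system[OF assms assms] by simp
  then have "integrable lborel (\<lambda>x. wav_system i x * wav_system i x)"
    unfolding L2_inner_def using not_integrable_integral_eq by fastforce
  then show ?thesis
    by (simp add: square_integrable_def power2_eq_square)
qed

lemma wav_system_in_span: "i \<in> wav_index \<Longrightarrow> wav_system i \<in> wav_span"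
  by (intro ae_span_member square_integrable_wav_system)

lemma dilate_rpsi_in_span:
  assumes "l \<in> {1, 2}"
  shows "dilate n k (rpsi l) \<in> wav_span"
proof -
  have "(\<lambda>x. 2 powr - (real n / 2) * wav_system (Inr (n, k, l)) x) \<in> wav_span"
    using assms by (intro wav_span.scale_mem wav_system_in_span) (simp add: wav_index_def)
  then show ?thesis
    by (simp add: dilate_def[abs_def] wav_system_Inr powr_minus field_simps)
qed

lemma dilate_combination_in_span:
  assumes "dilate n k box01 \<in> wav_span" "dilate n k ramp01 \<in> wav_span"
    and "g \<in> borel_measurable borel"
    and g: "\<And>y. y \<notin> {0, 1/2, 1} \<Longrightarrow> g y = a1 * box01 y + a2 * ramp01 y + a3 * rpsi 1 y + a4 * rpsi 2 y"
  shows "dilate n k g \<in> wav_span"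
proof (rule ae_span_AE_cong)
  show "(\<lambda>x. a1 * dilate n k box01 x + a2 * dilate n k ramp01 x
      + a3 * dilate n k (rpsi 1) x + a4 * dilate n k (rpsi 2) x) \<in> wav_span"
    using assms(1,2) dilate_rpsi_in_span[of 1] dilate_rpsi_in_span[of 2]
    by (intro wav_span.add_mem wav_span.scale_mem) auto
  show "dilate n k g \<in> borel_measurable lborel"
    using assms(3) by measurable
  show "AE x in lborel. dilate n k g x = a1 * dilate n k box01 x + a2 * dilate n k ramp01 x
      + a3 * dilate n k (rpsi 1) x + a4 * dilate n k (rpsi 2) x"
  proof -
    have "AE x in lborel. 2^n * x - real_of_int k \<notin> {0, 1/2, 1}"
      by (rule AE_lborel_affine_notin) simp_all
    then show ?thesis
      by eventually_elim (simp add: dilate_def g)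
  qed
qed

lemma dilate_box_ramp_in_span: "dilate n k box01 \<in> wav_span \<and> dilate n k ramp01 \<in> wav_span"
proof (induction n arbitrary: k)
  case 0
  have phi: "(\<lambda>x. rphi l (x - real_of_int k)) \<in> wav_span" if "l \<in> {1, 2}" for l
    using that wav_system_in_span[of "Inl (l, k)"] by (simp add: wav_index_def wav_system_Inl)
  have box: "dilate 0 k box01 = (\<lambda>x. rphi 1 (x - real_of_int k))"
    by (simp add: dilate_def fun_eq_iff box01_def rphi_def)
  have ramp: "dilate 0 k ramp01
      = (\<lambda>x. 1 / (2 * sqrt 3) * rphi 2 (x - real_of_int k) + 1/2 * rphi 1 (x - real_of_int k))"
    by (simp add: dilate_def fun_eq_iff ramp01_def rphi_def field_simps)
  show ?case
    unfolding box ramp by (intro conjI wav_span.add_mem wav_span.scale_mem phi) simp_all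
next
  case (Suc n)
  have IH: "dilate n (k div 2) box01 \<in> wav_span" "dilate n (k div 2) ramp01 \<in> wav_span"
    using Suc.IH by auto
  have "k = 2 * (k div 2) \<or> k = 2 * (k div 2) + 1" by presburger
  then show ?case
  proof
    assume k: "k = 2 * (k div 2)"
    have "dilate n (k div 2) (\<lambda>y. box01 (2 * y)) \<in> wav_span"
      by (rule dilate_combination_in_span[OF IH]) (measurable, rule two_scale_relations(1))
    moreover have "dilate n (k div 2) (\<lambda>y. ramp01 (2 * y)) \<in> wav_span"
      by (rule dilate_combination_in_span[OF IH]) (measurable, rule two_scale_relations(2))
    moreover have "dilate (Suc n) k f = dilate n (k div 2) (\<lambda>y. f (2 * y))" for f
      by (subst (1) k) (rule dilate_Suc_even)
    ultimately show ?case
      by simp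
  next
    assume k: "k = 2 * (k div 2) + 1"
    have "dilate n (k div 2) (\<lambda>y. box01 (2 * y - 1)) \<in> wav_span"
      by (rule dilate_combination_in_span[OF IH]) (measurable, rule two_scale_relations(3))
    moreover have "dilate n (k div 2) (\<lambda>y. ramp01 (2 * y - 1)) \<in> wav_span"
      by (rule dilate_combination_in_span[OF IH]) (measurable, rule two_scale_relations(4))
    moreover have "dilate (Suc n) k f = dilate n (k div 2) (\<lambda>y. f (2 * y - 1))" for f
      by (subst (1) k) (rule dilate_Suc_odd)
    ultimately show ?case
      by simp
  qed
qed

lemma dyadic_indicator_in_span: "indicator (dyadic_interval n k) \<in> wav_span"
proof (rule ae_span_AE_cong[OF conjunct1[OF dilate_box_ramp_in_span[of n k]]])
  show "indicator (dyadic_interval n k) \<in> borel_measurable lborel"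
    by measurable
  have "AE x in lborel. 2^n * x - real_of_int k \<notin> {1}"
    by (rule AE_lborel_affine_notin) simp_all
  then show "AE x in lborel. indicator (dyadic_interval n k) x = dilate n k box01 x"
    by eventually_elim (auto simp: indicator_def box01_def dilate_def dyadic_interval_def field_simps)
qed

interpretation wav_span: l2_dyadic_subspace wav_span
  by unfold_locales (rule dyadic_indicator_in_span)

lemma wav_system_combinations_dense:
  assumes f: "square_integrable f" and "e > 0"
  shows "\<exists>F c. finite F \<and> F \<subseteq> wav_index
    \<and> (LINT x|lborel. (f x - (\<Sum>i\<in>F. c i * wav_system i x))\<^sup>2) < e"
proof -
  obtain g where "g \<in> wav_span" and g: "(LINT x|lborel. (f x - g x)\<^sup>2) < e"
    using wav_span.dense_in_L2[OF assms] by blast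
  then obtain F c where F: "finite F" "F \<subseteq> wav_index"
      and g_eq: "AE x in lborel. g x = (\<Sum>i\<in>F. c i * wav_system i x)"
    unfolding ae_span_def by blast
  have [measurable]: "f \<in> borel_measurable lborel" "g \<in> borel_measurable lborel"
    using f \<open>g \<in> wav_span\<close> by (auto simp: ae_span_def square_integrable_def)
  have "(LINT x|lborel. (f x - (\<Sum>i\<in>F. c i * wav_system i x))\<^sup>2) = (LINT x|lborel. (f x - g x)\<^sup>2)"
  proof (rule integral_cong_AE)
    show "AE x in lborel. (f x - (\<Sum>i\<in>F. c i * wav_system i x))\<^sup>2 = (f x - g x)\<^sup>2"
      using g_eq by eventually_elim simp
  qed measurable
  with F g show ?thesis
    by (intro exI[of _ F] exI[of _ c]) simp
qed

theorem mainTheorem2: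
  shows "orthonormal_basis_L2 wav_index wav_system"
  unfolding orthonormal_basis_L2_def
proof (intro conjI ballI allI impI)
  show "square_integrable (wav_system i)" if "i \<in> wav_index" for i
    using that by (rule square_integrable_wav_system)
  show "L2_inner (wav_system i) (wav_system j) = (if i = j then 1 else 0)"
    if "i \<in> wav_index" "j \<in> wav_index" for i j
    using that by (rule orthonormal_wav_system)
  show "\<exists>F c. finite F \<and> F \<subseteq> wav_index
      \<and> (LINT x|lborel. (f x - (\<Sum>i\<in>F. c i * wav_system i x))\<^sup>2) < e"
    if "square_integrable f" "e > 0" for f :: "real \<Rightarrow> real" and e :: real
    using that by (rule wav_system_combinations_dense)
qed

end
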